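(* Let $\mathcal{W}$ and $\mathcal{V}$ be compact and let the stage cost be $l(x,w;(u,y))=|w|_Q^2+|y-h(x,u)|_R^2$ with $Q,R\succ0$. Then there exists $A>0$ such that $J_{[t_1,t_2]}(z^\infty_{t_1:t_2})\leq A(t_2-t_1)$ for all integers $t_1\le t_2$ and every possible data sequence $d_{-\infty:\infty}$.
   Context: System: $x_{t+1}=f(x_t,u_t,w_t)$, $y_t=h(x_t,u_t)+v_t$ with $x_t\in\mathbb{R}^n,u_t\in\mathbb{R}^m,w_t\in\mathbb{R}^q,v_t\in\mathbb{R}^p$, $f,h$ continuous; known sets $\mathcal{X},\mathcal{U},\mathcal{W}\ni0,\mathcal{V}$ with $f(\mathcal{X}\times\mathcal{U}\times\mathcal{W})\subseteq\mathcal{X}$. Data $d_t=(u_t,y_t)$; a possible data sequence $(d_t)_{t\in\mathbb{Z}}$ is one generated by the system for all $t\in\mathbb{Z}$ by a trajectory with $(x_t,u_t,w_t,v_t)\in\mathcal{X}\times\mathcal{U}\times\mathcal{W}\times\mathcal{V}$. The infinite-horizon problem $P_\infty(d_{-\infty:\infty})$ minimizes $\sum_{j\in\mathbb{Z}}l(\hat x_j,\hat w_j;d_j)$ over bi-infinite sequences subject to $\hat x_{j+1}=f(\hat x_j,u_j,\hat w_j)$, $\hat x_j\in\mathcal{X}$, $\hat w_j\in\mathcal{W}$, $y_j-h(\hat x_j,u_j)\in\mathcal{V}$ for all $j\in\mathbb{Z}$; its solution is assumed to exist uniquely and is denoted $z^\infty_j=(x^\infty_j,w^\infty_j)$. Performance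 criterion: $J_{[t_1,t_2]}(\hat z_{t_1:t_2})=\sum_{j=t_1}^{t_2-1}l(\hat z_j;d_j)$. *)

theory Defs
  imports "HOL-Analysis.Analysis"
begin

definition pos_def_mat :: "real^'k^'k \<Rightarrow> bool" where
  "pos_def_mat Q \<longleftrightarrow> transpose Q = Q \<and> (\<forall>v. v \<noteq> 0 \<longrightarrow> v \<bullet> (Q *v v) > 0)"

definition stage_cost ::
  "real^'q^'q \<Rightarrow> real^'p^'p \<Rightarrow> (real^'n \<Rightarrow> real^'m \<Rightarrow> real^'p)
   \<Rightarrow> real^'n \<Rightarrow> real^'q \<Rightarrow> (real^'m) \<times> (real^'p) \<Rightarrow> real" where
  "stage_cost Q R h x w d =
     (let u = fst d; y = snd d; e = y - h x u in w \<bullet> (Q *v w) + e \<bullet> (R *v e))"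

definition possible_data ::
  "(real^'n \<Rightarrow> real^'m \<Rightarrow> real^'q \<Rightarrow> real^'n) \<Rightarrow> (real^'n \<Rightarrow> real^'m \<Rightarrow> real^'p)
   \<Rightarrow> (real^'n) set \<Rightarrow> (real^'m) set \<Rightarrow> (real^'q) set \<Rightarrow> (real^'p) set
   \<Rightarrow> (int \<Rightarrow> (real^'m) \<times> (real^'p)) \<Rightarrow> bool" where
  "possible_data f h X U W V d \<longleftrightarrow>
     (\<exists>x w v. \<forall>t. x t \<in> X \<and> fst (d t) \<in> U \<and> w t \<in> W \<and> v t \<in> V \<and>
        x (t + 1) = f (x t) (fst (d t)) (w t) \<and>
        snd (d t) = h (x t) (fst (d t)) + v t)"

definition Pinf_feasible ::
  "(real^'n \<Rightarrow> real^'m \<Rightarrow> real^'q \<Rightarrow> real^'n) \<Rightarrow> (real^'n \<Rightarrow> real^'m \<Rightarrow> real^'p)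
   \<Rightarrow> (real^'n) set \<Rightarrow> (real^'q) set \<Rightarrow> (real^'p) set
   \<Rightarrow> (int \<Rightarrow> (real^'m) \<times> (real^'p)) \<Rightarrow> (int \<Rightarrow> real^'n) \<Rightarrow> (int \<Rightarrow> real^'q) \<Rightarrow> bool" where
  "Pinf_feasible f h X W V d xh wh \<longleftrightarrow>
     (\<forall>j. xh (j + 1) = f (xh j) (fst (d j)) (wh j) \<and> xh j \<in> X \<and> wh j \<in> W \<and>
          snd (d j) - h (xh j) (fst (d j)) \<in> V)"

definition Pinf_cost ::
  "(real^'n \<Rightarrow> real^'q \<Rightarrow> (real^'m) \<times> (real^'p) \<Rightarrow> real) \<Rightarrow> (int \<Rightarrow> (real^'m) \<times> (real^'p))
   \<Rightarrow> (int \<Rightarrow> real^'n) \<Rightarrow> (int \<Rightarrow> real^'q) \<Rightarrow> ennreal" where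
  "Pinf_cost l d xh wh = (\<integral>\<^sup>+ j. ennreal (l (xh j) (wh j) (d j)) \<partial>count_space UNIV)"

definition Pinf_solution ::
  "(real^'n \<Rightarrow> real^'m \<Rightarrow> real^'q \<Rightarrow> real^'n) \<Rightarrow> (real^'n \<Rightarrow> real^'m \<Rightarrow> real^'p)
   \<Rightarrow> (real^'n) set \<Rightarrow> (real^'q) set \<Rightarrow> (real^'p) set
   \<Rightarrow> (real^'n \<Rightarrow> real^'q \<Rightarrow> (real^'m) \<times> (real^'p) \<Rightarrow> real)
   \<Rightarrow> (int \<Rightarrow> (real^'m) \<times> (real^'p)) \<Rightarrow> (int \<Rightarrow> real^'n) \<Rightarrow> (int \<Rightarrow> real^'q) \<Rightarrow> bool" where
  "Pinf_solution f h X W V l d xs ws \<longleftrightarrow>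
     Pinf_feasible f h X W V d xs ws \<and>
     (\<forall>xh wh. Pinf_feasible f h X W V d xh wh \<longrightarrow>
        Pinf_cost l d xs ws \<le> Pinf_cost l d xh wh) \<and>
     (\<forall>xh wh. Pinf_feasible f h X W V d xh wh \<and>
        Pinf_cost l d xh wh = Pinf_cost l d xs ws \<longrightarrow> xh = xs \<and> wh = ws)"

definition perf_J ::
  "(real^'n \<Rightarrow> real^'q \<Rightarrow> (real^'m) \<times> (real^'p) \<Rightarrow> real) \<Rightarrow> (int \<Rightarrow> (real^'m) \<times> (real^'p))
   \<Rightarrow> int \<Rightarrow> int \<Rightarrow> (int \<Rightarrow> real^'n) \<Rightarrow> (int \<Rightarrow> real^'q) \<Rightarrow> real" where
  "perf_J l d t1 t2 xh wh = (\<Sum>j\<in>{t1..<t2}. l (xh j) (wh j) (d j))"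

end

theory Submission
  imports Defs
begin

text \<open>Feasibility for \<open>P\<^sub>\<infinity>\<close> alone forces \<open>w\<^sub>j \<in> W\<close> and \<open>y\<^sub>j - h(x\<^sub>j, u\<^sub>j) \<in> V\<close>, so on every
  feasible trajectory, in particular on \<open>z\<^sup>\<infinity>\<close>, each stage cost is at most the maximum of
  \<open>|w|\<^sub>Q\<^sup>2\<close> over the compact \<open>W\<close> plus that of \<open>|v|\<^sub>R\<^sup>2\<close> over the compact \<open>V\<close>. Summing over
  \<open>t\<^sub>2 - t\<^sub>1\<close> stages gives the linear bound.\<close>

lemma quadratic_form_bdd_above_compact:
  fixes S :: "(real^'k) set" and M :: "real^'k^'k"
  assumes "compact S"
  shows "bdd_above ((\<lambda>v. v \<bullet> (M *v v)) ` S)"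
proof -
  have "continuous_on S (\<lambda>v. v \<bullet> (M *v v))"
    by (intro continuous_intros)
  with assms show ?thesis
    by (intro bounded_imp_bdd_above compact_imp_bounded compact_continuous_image)
qed

lemma stage_cost_uniformly_bounded:
  fixes W :: "(real^'q) set" and V :: "(real^'p) set"
    and Q :: "real^'q^'q" and R :: "real^'p^'p"
    and h :: "real^'n \<Rightarrow> real^'m \<Rightarrow> real^'p"
  assumes "compact W" and "compact V"
  shows "\<exists>A>0. \<forall>x w d. w \<in> W \<longrightarrow> snd d - h x (fst d) \<in> V \<longrightarrow> stage_cost Q R h x w d \<le> A"
proof -
  obtain BW where BW: "\<And>w. w \<in> W \<Longrightarrow> w \<bullet> (Q *v w) \<le> BW"
    using quadratic_form_bdd_above_compact[OF \<open>compact W\<close>, of Q] by (auto simp: bdd_above_def)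
  obtain BV where BV: "\<And>v. v \<in> V \<Longrightarrow> v \<bullet> (R *v v) \<le> BV"
    using quadratic_form_bdd_above_compact[OF \<open>compact V\<close>, of R] by (auto simp: bdd_above_def)
  show ?thesis
  proof (intro exI[of _ "1 + \<bar>BW\<bar> + \<bar>BV\<bar>"] conjI allI impI)
    fix x w d
    assume "w \<in> W" and "snd d - h x (fst d) \<in> V"
    with BW BV show "stage_cost Q R h x w d \<le> 1 + \<bar>BW\<bar> + \<bar>BV\<bar>"
      unfolding stage_cost_def Let_def by fastforce
  qed simp
qed

lemma perf_J_le_linear:
  assumes "\<And>j. l (xh j) (wh j) (d j) \<le> A" and "t1 \<le> t2"
  shows "perf_J l d t1 t2 xh wh \<le> A * real_of_int (t2 - t1)"
proof -
  have "perf_J l d t1 t2 xh wh \<le> (\<Sum>j\<in>{t1..<t2}. A)"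
    unfolding perf_J_def by (intro sum_mono assms(1))
  also have "\<dots> = A * real_of_int (t2 - t1)"
    using \<open>t1 \<le> t2\<close> by simp
  finally show ?thesis .
qed

theorem lemma1:
  fixes f :: "real^'n \<Rightarrow> real^'m \<Rightarrow> real^'q \<Rightarrow> real^'n"
    and h :: "real^'n \<Rightarrow> real^'m \<Rightarrow> real^'p"
    and X :: "(real^'n) set" and U :: "(real^'m) set"
    and W :: "(real^'q) set" and V :: "(real^'p) set"
    and Q :: "real^'q^'q" and R :: "real^'p^'p"
  assumes f_cont: "continuous_on UNIV (\<lambda>(x, u, w). f x u w)"
    and h_cont: "continuous_on UNIV (\<lambda>(x, u). h x u)"
    and W0: "0 \<in> W"
    and f_inv: "\<forall>x\<in>X. \<forall>u\<in>U. \<forall>w\<in>W. f x u w \<in> X"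
    and W_cpt: "compact W" and V_cpt: "compact V"
    and Q_pd: "pos_def_mat Q" and R_pd: "pos_def_mat R"
  shows "\<exists>A>0. \<forall>d xs ws. possible_data f h X U W V d \<longrightarrow>
           Pinf_solution f h X W V (stage_cost Q R h) d xs ws \<longrightarrow>
           (\<forall>t1 t2. t1 \<le> t2 \<longrightarrow>
              perf_J (stage_cost Q R h) d t1 t2 xs ws \<le> A * real_of_int (t2 - t1))"
proof -
  obtain A where "A > 0" and A_bound:
    "\<And>x w d. w \<in> W \<Longrightarrow> snd d - h x (fst d) \<in> V \<Longrightarrow> stage_cost Q R h x w d \<le> A"
    using stage_cost_uniformly_bounded[OF W_cpt V_cpt, where Q = Q and R = R and h = h] by blast
  show ?thesis
  proof (intro exI[of _ A] conjI allI impI \<open>A > 0\<close>)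
    fix d xs ws and t1 t2 :: int
    assume "Pinf_solution f h X W V (stage_cost Q R h) d xs ws" and "t1 \<le> t2"
    then have "Pinf_feasible f h X W V d xs ws"
      unfolding Pinf_solution_def by blast
    then have "stage_cost Q R h (xs j) (ws j) (d j) \<le> A" for j
      unfolding Pinf_feasible_def by (blast intro: A_bound)
    then show "perf_J (stage_cost Q R h) d t1 t2 xs ws \<le> A * real_of_int (t2 - t1)"
      using \<open>t1 \<le> t2\<close> by (rule perf_J_le_linear)
  qed
qed

end
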